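(* Let $G=(V,E)$ be a finite undirected graph with independence number $\alpha(G)$, and for $v\in V$ let $N_{\le1}(v)$ be the set consisting of $v$ and its neighbors in $G$. Let $K\ge1$, $A=\{1,\dots,K\}$, and for each $v\in V$ let $\boldsymbol p(v)=(p(1,v),\dots,p(K,v))$ be a probability distribution on $A$. Define, for $i\in A$ and $v\in V$, $$q(i,v)=1-\prod_{v'\in N_{\le1}(v)}\bigl(1-p(i,v')\bigr).$$ Then for every $i\in A$ (with the convention that terms with $p(i,v)=0$ contribute $0$), $$\sum_{v\in V}\frac{p(i,v)}{q(i,v)}\le\frac{1}{1-e^{-1}}\Bigl(\alpha(G)+\sum_{v\in V}p(i,v)\Bigr).$$
   Context: The independence number $\alpha(G)$ is the maximum size of a set of vertices no two of which are joined by an edge. *)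

theory Defs
  imports Complex_Main
begin

text \<open>A finite simple undirected graph is given by a finite vertex set V and a
  symmetric irreflexive adjacency relation E (only edges between vertices of V matter).\<close>

definition independent_set :: "'a set \<Rightarrow> ('a \<Rightarrow> 'a \<Rightarrow> bool) \<Rightarrow> 'a set \<Rightarrow> bool" where
  "independent_set V E S \<longleftrightarrow> S \<subseteq> V \<and> (\<forall>u\<in>S. \<forall>w\<in>S. \<not> E u w)"

definition independence_number :: "'a set \<Rightarrow> ('a \<Rightarrow> 'a \<Rightarrow> bool) \<Rightarrow> nat" where
  "independence_number V E = Max {card S | S. independent_set V E S}"

definition closed_nbhd :: "'a set \<Rightarrow> ('a \<Rightarrow> 'a \<Rightarrow> bool) \<Rightarrow> 'a \<Rightarrow> 'a set" where
  "closed_nbhd V E v = insert v {u \<in> V. E v u}"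

end

theory Submission
  imports Defs "HOL-Analysis.Analysis"
begin

text \<open>Let W(v) be the total p(i,-)-mass of the closed neighbourhood N[v]. Since
  1 - x \<le> exp(-x), the denominator q(i,v) is at least 1 - exp(-W(v)), and convexity of exp
  gives 1 - exp(-W) \<ge> (1 - 1/e) min(1, W). Hence the v-th term is at most
  (p(i,v) + p(i,v)/W(v)) / (1 - 1/e), and it remains to prove the weighted Caro--Wei bound
  \<Sum>_v p(i,v)/W(v) \<le> \<alpha>(G). For this pick u minimising W: the terms over N[u] sum to at
  most 1, while deleting N[u] only increases the remaining terms and lowers \<alpha> by at
  least one, so induction on the vertex set concludes.\<close>

lemma one_minus_exp_neg_ge_min:
  fixes x :: real
  assumes "0 \<le> x"
  shows "(1 - exp (-1)) * min 1 x \<le> 1 - exp (-x)"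
proof (cases "x \<le> 1")
  case True
  have "exp ((1 - x) *\<^sub>R 0 + x *\<^sub>R (-1)) \<le> (1 - x) * exp 0 + x * exp (-1)"
    using convex_onD[OF exp_convex, of x 0 "-1"] assms True by auto
  then show ?thesis using True by (simp add: algebra_simps)
next
  case False
  then show ?thesis by simp
qed

lemma inverse_one_minus_exp_neg_le:
  fixes x :: real
  assumes "0 < x"
  shows "1 / (1 - exp (-x)) \<le> (1 + 1 / x) / (1 - exp (-1))"
proof -
  have "1 / (1 - exp (-x)) \<le> 1 / ((1 - exp (-1)) * min 1 x)"
    using one_minus_exp_neg_ge_min[of x] assms by (intro divide_left_mono) auto
  also have "\<dots> \<le> (1 + 1 / x) / (1 - exp (-1))"
    using assms by (auto simp: min_def divide_simps)
  finally show ?thesis .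
qed

lemma prod_one_minus_le_exp_neg_sum:
  fixes f :: "'a \<Rightarrow> real"
  assumes "\<And>x. x \<in> A \<Longrightarrow> f x \<le> 1"
  shows "(\<Prod>x\<in>A. 1 - f x) \<le> exp (- (\<Sum>x\<in>A. f x))"
proof (cases "finite A")
  case True
  have "(\<Prod>x\<in>A. 1 - f x) \<le> (\<Prod>x\<in>A. exp (- f x))"
    using assms exp_minus_ge by (intro prod_mono) auto
  also have "\<dots> = exp (- (\<Sum>x\<in>A. f x))"
    using True by (simp add: exp_sum[OF True, symmetric] sum_negf)
  finally show ?thesis .
qed simp

lemma finite_independent_set_cards:
  "finite V \<Longrightarrow> finite {card S | S. independent_set V E S}"
  by (rule finite_subset[of _ "card ` Pow V"]) (auto simp: independent_set_def)

lemma card_le_independence_number: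
  assumes "finite V" "independent_set V E S"
  shows "card S \<le> independence_number V E"
  unfolding independence_number_def
  using assms by (auto intro: Max_ge finite_independent_set_cards)

lemma independence_number_attained:
  assumes "finite V"
  obtains S where "independent_set V E S" "card S = independence_number V E"
proof -
  have "independence_number V E \<in> {card S | S. independent_set V E S}"
    unfolding independence_number_def
    by (rule Max_in[OF finite_independent_set_cards[OF assms]]) (auto simp: independent_set_def)
  then show ?thesis using that by auto
qed

lemma closed_nbhd_subset: "v \<in> V \<Longrightarrow> closed_nbhd V E v \<subseteq> V"
  by (auto simp: closed_nbhd_def)

lemma closed_nbhd_mono: "V' \<subseteq> V \<Longrightarrow> closed_nbhd V' E v \<subseteq> closed_nbhd V E v"
  by (auto simp: closed_nbhd_def)

lemma finite_closed_nbhd: "finite V \<Longrightarrow> finite (closed_nbhd V E v)"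
  by (simp add: closed_nbhd_def)

lemma independence_number_delete_closed_nbhd:
  assumes "finite V" "u \<in> V"
    and sym: "\<And>x y. E x y \<Longrightarrow> E y x" and irrefl: "\<And>x. \<not> E x x"
  shows "independence_number (V - closed_nbhd V E u) E + 1 \<le> independence_number V E"
proof -
  let ?V' = "V - closed_nbhd V E u"
  obtain S where S: "independent_set ?V' E S" "card S = independence_number ?V' E"
    using independence_number_attained[of ?V' E] assms(1) by blast
  have "independent_set V E (insert u S)"
    using S(1) assms unfolding independent_set_def closed_nbhd_def by blast
  moreover have "u \<notin> S" "finite S"
    using S(1) assms(1) unfolding independent_set_def closed_nbhd_def
    by (auto dest: finite_subset)
  ultimately show ?thesis
    using card_le_independence_number[OF assms(1), of E "insert u S"] S(2) by simp
qed

definition nbhd_weight :: "('a \<Rightarrow> real) \<Rightarrow> 'a set \<Rightarrow> ('a \<Rightarrow> 'a \<Rightarrow> bool) \<Rightarrow> 'a \<Rightarrow> real" where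
  "nbhd_weight p V E v = (\<Sum>u\<in>closed_nbhd V E v. p u)"

lemma nbhd_weight_ge_self:
  assumes "finite V" "v \<in> V" "\<And>u. u \<in> V \<Longrightarrow> 0 \<le> p u"
  shows "p v \<le> nbhd_weight p V E v"
  unfolding nbhd_weight_def using assms closed_nbhd_subset[OF assms(2), of E]
  by (intro member_le_sum) (auto simp: finite_closed_nbhd closed_nbhd_def)

lemma nbhd_ratio_le_delete:
  assumes "finite V" "V' \<subseteq> V" "v \<in> V'" "\<And>u. u \<in> V \<Longrightarrow> 0 \<le> p u"
  shows "p v / nbhd_weight p V E v \<le> p v / nbhd_weight p V' E v"
proof -
  have V': "finite V'" "\<And>u. u \<in> V' \<Longrightarrow> 0 \<le> p u"
    using assms finite_subset by auto
  have self_le: "p v \<le> nbhd_weight p V' E v"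
    using nbhd_weight_ge_self[OF V'(1) assms(3) V'(2)] .
  have mono: "nbhd_weight p V' E v \<le> nbhd_weight p V E v"
    unfolding nbhd_weight_def using assms closed_nbhd_subset[of v V E]
    by (intro sum_mono2 finite_closed_nbhd closed_nbhd_mono) (auto simp: closed_nbhd_def)
  show ?thesis
  proof (cases "p v = 0")
    case False
    then have "0 < p v" using assms by force
    with self_le mono show ?thesis by (auto intro!: divide_left_mono mult_pos_pos)
  qed simp
qed

lemma sum_nbhd_ratio_closed_nbhd_of_min_le_one:
  assumes "finite V" "u \<in> V" "\<And>w. w \<in> V \<Longrightarrow> nbhd_weight p V E u \<le> nbhd_weight p V E w"
    and "\<And>w. w \<in> V \<Longrightarrow> 0 \<le> p w"
  shows "(\<Sum>v\<in>closed_nbhd V E u. p v / nbhd_weight p V E v) \<le> 1"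
proof -
  let ?N = "closed_nbhd V E u" and ?W = "nbhd_weight p V E"
  have NV: "?N \<subseteq> V" using closed_nbhd_subset[OF assms(2)] .
  have le_W: "p v \<le> ?W u" if "v \<in> ?N" for v
    unfolding nbhd_weight_def using that assms(4) NV
    by (intro member_le_sum) (auto simp: finite_closed_nbhd[OF assms(1)])
  have "(\<Sum>v\<in>?N. p v / ?W v) \<le> (\<Sum>v\<in>?N. p v / ?W u)"
  proof (rule sum_mono)
    fix v assume v: "v \<in> ?N"
    show "p v / ?W v \<le> p v / ?W u"
    proof (cases "p v = 0")
      case False
      then have "0 < ?W u" using le_W[OF v] assms(4) v NV by force
      moreover have "?W u \<le> ?W v" using assms(3) v NV by blast
      ultimately show ?thesis using assms(4) v NV by (auto intro!: divide_left_mono)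
    qed simp
  qed
  also have "\<dots> = ?W u / ?W u"
    by (simp add: nbhd_weight_def flip: sum_divide_distrib)
  also have "\<dots> \<le> 1" by (simp add: divide_self_if)
  finally show ?thesis .
qed

text \<open>For \<open>p = 1\<close> on \<open>V\<close> this is the Caro--Wei bound.\<close>

lemma sum_nbhd_ratio_le_independence_number:
  assumes sym: "\<And>u w. E u w \<Longrightarrow> E w u" and irrefl: "\<And>u. \<not> E u u"
  shows "finite V \<Longrightarrow> (\<And>v. v \<in> V \<Longrightarrow> 0 \<le> p v) \<Longrightarrow>
    (\<Sum>v\<in>V. p v / nbhd_weight p V E v) \<le> real (independence_number V E)"
proof (induction V rule: finite_psubset_induct)
  case (psubset V)
  show ?case
  proof (cases "V = {}")
    case False
    let ?W = "nbhd_weight p V E"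
    obtain u where u: "u \<in> V" "\<And>w. w \<in> V \<Longrightarrow> ?W u \<le> ?W w"
      using psubset.hyps False by (metis arg_min_if_finite(1,2) not_le less_le_not_le)
    define N where "N = closed_nbhd V E u"
    define V' where "V' = V - N"
    have V'V: "V' \<subset> V" "V' \<subseteq> V"
      using u(1) by (auto simp: V'_def N_def closed_nbhd_def)
    have "(\<Sum>v\<in>V. p v / ?W v) = (\<Sum>v\<in>N. p v / ?W v) + (\<Sum>v\<in>V'. p v / ?W v)"
      using closed_nbhd_subset[OF u(1)] psubset.hyps
      unfolding V'_def N_def by (metis sum.subset_diff add.commute)
    also have "\<dots> \<le> 1 + (\<Sum>v\<in>V'. p v / nbhd_weight p V' E v)"
      using sum_nbhd_ratio_closed_nbhd_of_min_le_one[OF psubset.hyps u] psubset.prems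
        nbhd_ratio_le_delete[OF psubset.hyps V'V(2)]
      unfolding N_def by (intro add_mono sum_mono) auto
    also have "\<dots> \<le> 1 + real (independence_number V' E)"
      using psubset.IH[OF V'V(1)] psubset.prems V'V by auto
    also have "\<dots> \<le> real (independence_number V E)"
      using independence_number_delete_closed_nbhd[of V u E, OF psubset.hyps u(1) sym irrefl]
      unfolding V'_def N_def by simp
    finally show ?thesis .
  qed simp
qed

lemma ratio_one_minus_prod_le:
  assumes "finite V" "v \<in> V" "\<And>u. u \<in> V \<Longrightarrow> 0 \<le> p u" "\<And>u. u \<in> V \<Longrightarrow> p u \<le> 1"
  shows "(if p v = 0 then 0 else p v / (1 - (\<Prod>u\<in>closed_nbhd V E v. 1 - p u)))
    \<le> (p v + p v / nbhd_weight p V E v) / (1 - exp (-1))"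
proof (cases "p v = 0")
  case False
  let ?W = "nbhd_weight p V E v"
  have pos: "0 < p v" "0 < ?W"
    using False assms nbhd_weight_ge_self[OF assms(1-3), where E=E] by force+
  have prod_le: "(\<Prod>u\<in>closed_nbhd V E v. 1 - p u) \<le> exp (- ?W)"
    unfolding nbhd_weight_def using assms(4) closed_nbhd_subset[OF assms(2)]
    by (intro prod_one_minus_le_exp_neg_sum) auto
  have "0 < 1 - exp (- ?W)" using pos by simp
  then have "p v / (1 - (\<Prod>u\<in>closed_nbhd V E v. 1 - p u)) \<le> p v / (1 - exp (- ?W))"
    using prod_le pos by (intro divide_left_mono mult_pos_pos) linarith+
  also have "\<dots> = p v * (1 / (1 - exp (- ?W)))" by simp
  also have "\<dots> \<le> p v * ((1 + 1 / ?W) / (1 - exp (-1)))"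
    using pos inverse_one_minus_exp_neg_le[of ?W] by (intro mult_left_mono) auto
  finally show ?thesis
    using False by (simp add: algebra_simps add_divide_distrib)
qed simp

theorem lemma3:
  fixes V :: "'a set" and E :: "'a \<Rightarrow> 'a \<Rightarrow> bool"
    and K :: nat and p :: "nat \<Rightarrow> 'a \<Rightarrow> real" and i :: nat
  assumes "finite V"
    and "\<And>u w. E u w \<Longrightarrow> E w u"
    and "\<And>u. \<not> E u u"
    and "K \<ge> 1"
    and "\<And>j v. j \<in> {1..K} \<Longrightarrow> v \<in> V \<Longrightarrow> p j v \<ge> 0"
    and "\<And>v. v \<in> V \<Longrightarrow> (\<Sum>j\<in>{1..K}. p j v) = 1"
    and "i \<in> {1..K}"
  shows "(\<Sum>v\<in>V. (if p i v = 0 then 0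
            else p i v / (1 - (\<Prod>v'\<in>closed_nbhd V E v. (1 - p i v')))))
         \<le> (1 / (1 - exp (-1))) * (real (independence_number V E) + (\<Sum>v\<in>V. p i v))"
proof -
  have nonneg: "\<And>v. v \<in> V \<Longrightarrow> 0 \<le> p i v"
    using assms(5,7) by blast
  have le_one: "p i v \<le> 1" if "v \<in> V" for v
    using member_le_sum[of i "{1..K}" "\<lambda>j. p j v"] assms(5-7) that by auto
  have "(\<Sum>v\<in>V. (if p i v = 0 then 0
            else p i v / (1 - (\<Prod>v'\<in>closed_nbhd V E v. (1 - p i v')))))
      \<le> (\<Sum>v\<in>V. (p i v + p i v / nbhd_weight (p i) V E v) / (1 - exp (-1)))"
    using ratio_one_minus_prod_le[of V _ "p i" E] assms(1) nonneg le_one by (intro sum_mono) auto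
  also have "\<dots> = (1 / (1 - exp (-1))) * ((\<Sum>v\<in>V. p i v) + (\<Sum>v\<in>V. p i v / nbhd_weight (p i) V E v))"
    by (simp add: sum.distrib flip: sum_divide_distrib)
  also have "\<dots> \<le> (1 / (1 - exp (-1))) * ((\<Sum>v\<in>V. p i v) + real (independence_number V E))"
    using sum_nbhd_ratio_le_independence_number[of E V "p i", OF assms(2,3,1) nonneg]
    by (intro mult_left_mono add_left_mono) auto
  finally show ?thesis by (simp add: add.commute)
qed

end
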